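(* Let $\sigma(x,y)=(x\rightharpoonup y,x\leftharpoonup y)$ be an involutive left-non-degenerate quiver-theoretic Yang--Baxter map on a quiver $\mathscr{A}$ over $\Lambda$, let $x\star y:=(x\rightharpoonup\cdot)^{-1}(y)$ for $\mathfrak{s}(x)=\mathfrak{s}(y)$, and let $(\hat{\mathscr{A}},\hat\star)$ be the completion of the weak RC-system $(\mathscr{A},\star)$. Then the structure category $\mathscr{C}(\hat{\mathscr{A}})$ of the unital weak RC-system $(\hat{\mathscr{A}},\hat\star)$ is isomorphic to the structure category $\mathscr{C}(\sigma)$ of $\sigma$.
   Context: A quiver-theoretic Yang--Baxter map is a source/target-preserving map $\sigma$ on composable pairs satisfying the braid relation; involutive: $\sigma^2=\mathrm{id}$; left-non-degenerate: each $x\rightharpoonup\cdot\colon\mathscr{A}(\mathfrak{t}(x),\Lambda)\to\mathscr{A}(\mathfrak{s}(x),\Lambda)$ is bijective. $\mathscr{C}(\sigma)$ is the category presented by generators $\mathscr{A}$ and relations $x|y\sim(x\rightharpoonup y)|(x\leftharpoonup y)$ (path category modulo the generated congruence). A weak RC-system $(Q,\star)$: a quiver with partial operation such that $x\star y$ is defined only if $\mathfrak{s}(x)=\mathfrak{s}(y)$; if $x\star y$ is defined so is $y\star x$, $\mathfrak{s}(x\star y)=\mathfrak{t}(x)$, $\mathfrak{s}(y\star x)=\mathfrak{t}(y)$, $\mathfrak{t}(x\star y)=\mathfrak{t}(y\star x)$; and RC-law: if $x\star y,x\star z,(x\star y)\star(x\star z)$ are defined then $y\star z,(y\star x)\star(y\star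 z)$ are defined and $(x\star y)\star(x\star z)=(y\star x)\star(y\star z)$. A unit family is a family $\mathcal{E}=\{\epsilon_\lambda\}$ of loops $\epsilon_\lambda\colon\lambda\to\lambda$ with $x\star\epsilon_{\mathfrak{s}(x)}=\epsilon_{\mathfrak{t}(x)}$, $\epsilon_{\mathfrak{s}(x)}\star x=x$, $x\star x=\epsilon_{\mathfrak{t}(x)}$ (all defined) for all $x$; the system is unital if it has a unit family and $x\star y=y\star x=\epsilon_\mu$ with $x,y$ of target $\mu$ implies $x=y$. The completion $(\hat Q,\hat\star)$ adds a new loop $\epsilon_\lambda\notin Q$ at each vertex and sets $\epsilon_{\mathfrak{s}(y)}\hat\star y=y$, $x\hat\star\epsilon_{\mathfrak{s}(x)}=\epsilon_{\mathfrak{t}(x)}$, $x\hat\star x=\epsilon_{\mathfrak{t}(x)}$, and $x\hat\star y=x\star y$ otherwise. For a unital weak RC-system, $\star$ extends to paths by filling grids: for nonempty paths $\alpha=a_1|\dots|a_r$, $\beta=b_1|\dots|b_s$ with common source, fill an $r\times s$ grid whose squares are $(x,y)\mapsto(x\star y,y\star x)$ and let $\alpha\star\beta$ be the right column; with $\varepsilon\star\varepsilon=\varepsilon$, $\varepsilon\star\alpha=\alpha$, $\alpha\star\varepsilon=\varepsilon$ for empty paths $\varepsilon$. Define $\alpha\equiv\beta$ iff $\alpha\star\beta$ and $\beta\star\alpha$ both lie in $\mathrm{Path}(\mathcal{E})$; this is a congruence and the structure category is $\mathscr{C}(Q)=\mathrm{Path}(Q)/\!\equiv$. (Under the hypotheses,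 $(\hat{\mathscr{A}},\hat\star)$ is a unital weak RC-system.) *)

theory Defs
  imports Main
begin

text \<open>A path is a pair (v, xs): a start vertex v and a list of arrows x1,...,xr
  (composed left to right: x1|x2|...|xr with t xi = s x(i+1)).\<close>

fun path_ok :: "('a \<Rightarrow> 'v) \<Rightarrow> ('a \<Rightarrow> 'v) \<Rightarrow> 'v \<Rightarrow> 'a list \<Rightarrow> bool" where
  "path_ok s t v [] = True"
| "path_ok s t v (x # xs) = (s x = v \<and> path_ok s t (t x) xs)"

fun ptgt :: "('a \<Rightarrow> 'v) \<Rightarrow> 'v \<Rightarrow> 'a list \<Rightarrow> 'v" where
  "ptgt t v [] = v"
| "ptgt t v (x # xs) = ptgt t (t x) xs"

definition Paths :: "'v set \<Rightarrow> 'a set \<Rightarrow> ('a \<Rightarrow> 'v) \<Rightarrow> ('a \<Rightarrow> 'v) \<Rightarrow> ('v \<times> 'a list) set" where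
  "Paths V A s t = {(v, xs). v \<in> V \<and> set xs \<subseteq> A \<and> path_ok s t v xs}"

text \<open>Composition is written in diagrammatic order: Comp f g = "f then g",
  defined when Cod f = Dom g.\<close>

record ('o, 'm) cat =
  Ob :: "'o set"
  Mor :: "'m set"
  Dom :: "'m \<Rightarrow> 'o"
  Cod :: "'m \<Rightarrow> 'o"
  Idm :: "'o \<Rightarrow> 'm"
  Comp :: "'m \<Rightarrow> 'm \<Rightarrow> 'm"

definition cat_iso :: "('o1, 'm1) cat \<Rightarrow> ('o2, 'm2) cat \<Rightarrow> bool" where
  "cat_iso C D \<longleftrightarrow> (\<exists>Fo Fm.
      bij_betw Fo (Ob C) (Ob D) \<and> bij_betw Fm (Mor C) (Mor D) \<and>
      (\<forall>f\<in>Mor C. Dom D (Fm f) = Fo (Dom C f) \<and> Cod D (Fm f) = Fo (Cod C f)) \<and>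
      (\<forall>a\<in>Ob C. Fm (Idm C a) = Idm D (Fo a)) \<and>
      (\<forall>f\<in>Mor C. \<forall>g\<in>Mor C. Cod C f = Dom C g \<longrightarrow>
          Fm (Comp C f g) = Comp D (Fm f) (Fm g)))"


definition pcls :: "('v \<times> 'a list) set \<Rightarrow> (('v \<times> 'a list) \<Rightarrow> ('v \<times> 'a list) \<Rightarrow> bool)
    \<Rightarrow> ('v \<times> 'a list) \<Rightarrow> ('v \<times> 'a list) set" where
  "pcls P R p = {q \<in> P. R p q}"

text \<open>Path(Q)/R: objects are the vertices, morphisms the R-classes of paths,
  identities the classes of empty paths, composition induced by concatenation
  of representatives.\<close>

definition path_quot_cat :: "'v set \<Rightarrow> 'a set \<Rightarrow> ('a \<Rightarrow> 'v) \<Rightarrow> ('a \<Rightarrow> 'v)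
    \<Rightarrow> (('v \<times> 'a list) \<Rightarrow> ('v \<times> 'a list) \<Rightarrow> bool) \<Rightarrow> ('v, ('v \<times> 'a list) set) cat" where
  "path_quot_cat V A s t R =
    \<lparr> Ob = V,
      Mor = pcls (Paths V A s t) R ` Paths V A s t,
      Dom = (\<lambda>X. fst (SOME p. p \<in> X)),
      Cod = (\<lambda>X. case (SOME p. p \<in> X) of (v, xs) \<Rightarrow> ptgt t v xs),
      Idm = (\<lambda>v. pcls (Paths V A s t) R (v, [])),
      Comp = (\<lambda>X Y. pcls (Paths V A s t) R
                 (fst (SOME p. p \<in> X), snd (SOME p. p \<in> X) @ snd (SOME q. q \<in> Y))) \<rparr>"

text \<open>sigma(x,y) = (lact x y, ract x y) = (x \<rightharpoonup> y, x \<leftharpoonup> y), for composable x|y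
  (t x = s y).\<close>

definition qYB_map :: "'v set \<Rightarrow> 'a set \<Rightarrow> ('a \<Rightarrow> 'v) \<Rightarrow> ('a \<Rightarrow> 'v)
    \<Rightarrow> ('a \<Rightarrow> 'a \<Rightarrow> 'a) \<Rightarrow> ('a \<Rightarrow> 'a \<Rightarrow> 'a) \<Rightarrow> bool" where
  "qYB_map V A s t lact ract \<longleftrightarrow>
    (\<forall>x\<in>A. s x \<in> V \<and> t x \<in> V) \<and>
    (\<forall>x\<in>A. \<forall>y\<in>A. t x = s y \<longrightarrow>
        lact x y \<in> A \<and> ract x y \<in> A \<and>
        s (lact x y) = s x \<and> t (lact x y) = s (ract x y) \<and> t (ract x y) = t y) \<and>
    (\<forall>x\<in>A. \<forall>y\<in>A. \<forall>z\<in>A. t x = s y \<and> t y = s z \<longrightarrow>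
      (let s1 = (\<lambda>(a, b, c). (lact a b, ract a b, c));
           s2 = (\<lambda>(a, b, c). (a, lact b c, ract b c))
       in s1 (s2 (s1 (x, y, z))) = s2 (s1 (s2 (x, y, z)))))"

definition qYB_involutive :: "'a set \<Rightarrow> ('a \<Rightarrow> 'v) \<Rightarrow> ('a \<Rightarrow> 'v)
    \<Rightarrow> ('a \<Rightarrow> 'a \<Rightarrow> 'a) \<Rightarrow> ('a \<Rightarrow> 'a \<Rightarrow> 'a) \<Rightarrow> bool" where
  "qYB_involutive A s t lact ract \<longleftrightarrow>
    (\<forall>x\<in>A. \<forall>y\<in>A. t x = s y \<longrightarrow>
       lact (lact x y) (ract x y) = x \<and> ract (lact x y) (ract x y) = y)"

definition qYB_left_nondeg :: "'a set \<Rightarrow> ('a \<Rightarrow> 'v) \<Rightarrow> ('a \<Rightarrow> 'v)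
    \<Rightarrow> ('a \<Rightarrow> 'a \<Rightarrow> 'a) \<Rightarrow> bool" where
  "qYB_left_nondeg A s t lact \<longleftrightarrow>
    (\<forall>x\<in>A. bij_betw (lact x) {y\<in>A. s y = t x} {y\<in>A. s y = s x})"

text \<open>Structure category C(sigma): path category modulo the congruence generated
  by x|y ~ (x \<rightharpoonup> y)|(x \<leftharpoonup> y).  The generated congruence is the equivalence
  closure of the one-step rewriting inside arbitrary contexts.\<close>

definition yb_step :: "'v set \<Rightarrow> 'a set \<Rightarrow> ('a \<Rightarrow> 'v) \<Rightarrow> ('a \<Rightarrow> 'v)
    \<Rightarrow> ('a \<Rightarrow> 'a \<Rightarrow> 'a) \<Rightarrow> ('a \<Rightarrow> 'a \<Rightarrow> 'a)
    \<Rightarrow> ('v \<times> 'a list) \<Rightarrow> ('v \<times> 'a list) \<Rightarrow> bool" where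
  "yb_step V A s t lact ract p q \<longleftrightarrow>
    p \<in> Paths V A s t \<and>
    (\<exists>v u x y w. p = (v, u @ [x, y] @ w) \<and> q = (v, u @ [lact x y, ract x y] @ w))"

definition yb_struct_cat :: "'v set \<Rightarrow> 'a set \<Rightarrow> ('a \<Rightarrow> 'v) \<Rightarrow> ('a \<Rightarrow> 'v)
    \<Rightarrow> ('a \<Rightarrow> 'a \<Rightarrow> 'a) \<Rightarrow> ('a \<Rightarrow> 'a \<Rightarrow> 'a) \<Rightarrow> ('v, ('v \<times> 'a list) set) cat" where
  "yb_struct_cat V A s t lact ract =
     path_quot_cat V A s t (equivclp (yb_step V A s t lact ract))"

text \<open>A partial operation is modelled as op :: 'b \<Rightarrow> 'b \<Rightarrow> 'b option.\<close>

definition yb_star :: "'a set \<Rightarrow> ('a \<Rightarrow> 'v) \<Rightarrow> ('a \<Rightarrow> 'v) \<Rightarrow> ('a \<Rightarrow> 'a \<Rightarrow> 'a)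
    \<Rightarrow> 'a \<Rightarrow> 'a \<Rightarrow> 'a option" where
  "yb_star A s t lact x y =
     (if s x = s y then Some (THE z. z \<in> A \<and> s z = t x \<and> lact x z = y) else None)"

text \<open>Completion: the new loop epsilon_v is Inr v (so it is not in Inl ` A).\<close>

definition compl_arrows :: "'v set \<Rightarrow> 'a set \<Rightarrow> ('a + 'v) set" where
  "compl_arrows V A = Inl ` A \<union> Inr ` V"

fun compl_src :: "('a \<Rightarrow> 'v) \<Rightarrow> ('a + 'v) \<Rightarrow> 'v" where
  "compl_src s (Inl a) = s a"
| "compl_src s (Inr v) = v"

fun compl_tgt :: "('a \<Rightarrow> 'v) \<Rightarrow> ('a + 'v) \<Rightarrow> 'v" where
  "compl_tgt t (Inl a) = t a"
| "compl_tgt t (Inr v) = v"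

definition compl_op :: "('a \<Rightarrow> 'v) \<Rightarrow> ('a \<Rightarrow> 'v) \<Rightarrow> ('a \<Rightarrow> 'a \<Rightarrow> 'a option)
    \<Rightarrow> ('a + 'v) \<Rightarrow> ('a + 'v) \<Rightarrow> ('a + 'v) option" where
  "compl_op s t op x y =
     (if compl_src s x \<noteq> compl_src s y then None
      else if x = Inr (compl_src s y) then Some y
      else if y = Inr (compl_src s x) then Some (Inr (compl_tgt t x))
      else if x = y then Some (Inr (compl_tgt t x))
      else (case (x, y) of (Inl a, Inl b) \<Rightarrow> map_option Inl (op a b) | _ \<Rightarrow> None))"

text \<open>Extension of star to paths by filling grids.  For an arrow x and a path
  beta = b1|...|bs with the same source, rcol op x beta is the right column
  (x star b1)|(x' star b2)|... where x' = b1 star x etc.  For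
  alpha = a1|...|ar, alpha star beta is obtained column by column.\<close>

fun rcol :: "('b \<Rightarrow> 'b \<Rightarrow> 'b option) \<Rightarrow> 'b \<Rightarrow> 'b list \<Rightarrow> 'b list option" where
  "rcol op x [] = Some []"
| "rcol op x (b # bs) =
     (case op x b of None \<Rightarrow> None | Some c \<Rightarrow>
       (case op b x of None \<Rightarrow> None | Some x' \<Rightarrow>
         (case rcol op x' bs of None \<Rightarrow> None | Some cs \<Rightarrow> Some (c # cs))))"

fun pstar :: "('b \<Rightarrow> 'b \<Rightarrow> 'b option) \<Rightarrow> 'b list \<Rightarrow> 'b list \<Rightarrow> 'b list option" where
  "pstar op [] bs = Some bs"
| "pstar op (a # as) bs =
     (case rcol op a bs of None \<Rightarrow> None | Some cs \<Rightarrow> pstar op as cs)"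

definition rc_equiv :: "'v set \<Rightarrow> ('b \<Rightarrow> 'b \<Rightarrow> 'b option) \<Rightarrow> ('v \<Rightarrow> 'b)
    \<Rightarrow> ('v \<times> 'b list) \<Rightarrow> ('v \<times> 'b list) \<Rightarrow> bool" where
  "rc_equiv V op eps p q \<longleftrightarrow>
    fst p = fst q \<and>
    (\<exists>g. pstar op (snd p) (snd q) = Some g \<and> set g \<subseteq> eps ` V) \<and>
    (\<exists>d. pstar op (snd q) (snd p) = Some d \<and> set d \<subseteq> eps ` V)"

definition rc_struct_cat :: "'v set \<Rightarrow> 'b set \<Rightarrow> ('b \<Rightarrow> 'v) \<Rightarrow> ('b \<Rightarrow> 'v)
    \<Rightarrow> ('b \<Rightarrow> 'b \<Rightarrow> 'b option) \<Rightarrow> ('v \<Rightarrow> 'b) \<Rightarrow> ('v, ('v \<times> 'b list) set) cat" where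
  "rc_struct_cat V B s t op eps = path_quot_cat V B s t (rc_equiv V op eps)"

end

(*
  Deleting the unit loops maps the paths of the completion onto the paths of A, compatibly
  with concatenation; it induces an isomorphism of the two quotient categories once two paths
  alpha, beta of the completion satisfy alpha \<equiv> beta exactly when their images are equal
  in C(sigma).

  If alpha \<equiv> beta, fill the grid of alpha and beta: each square with sides x, x \<star> y and
  y, y \<star> x is a defining relation of C(sigma), since x \<rightharpoonup> (x \<star> y) = y and
  x \<leftharpoonup> (x \<star> y) = y \<star> x. So alpha (alpha \<star> beta) and beta (beta \<star> alpha) are equal in
  C(sigma), and they are alpha and beta followed by units.

  Conversely, \<equiv> is a congruence (transitivity is the RC-law for paths), every path is
  \<equiv> to the path with its units deleted, and a defining relation x|y ~ sigma(x, y) holds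
  for \<equiv> because it is the grid square of x and x \<rightharpoonup> y.
*)

theory Submission
  imports Defs
begin

section \<open>Paths and grids\<close>

lemma path_ok_append [simp]:
  "path_ok s t v (xs @ ys) \<longleftrightarrow> path_ok s t v xs \<and> path_ok s t (ptgt t v xs) ys"
  by (induction xs arbitrary: v) auto

lemma ptgt_append [simp]: "ptgt t v (xs @ ys) = ptgt t (ptgt t v xs) ys"
  by (induction xs arbitrary: v) auto

lemma Paths_iff: "(v, xs) \<in> Paths V A s t \<longleftrightarrow> v \<in> V \<and> set xs \<subseteq> A \<and> path_ok s t v xs"
  unfolding Paths_def by simp

lemma Paths_append:
  "(v, xs) \<in> Paths V A s t \<Longrightarrow> (ptgt t v xs, ys) \<in> Paths V A s t \<Longrightarrow> (v, xs @ ys) \<in> Paths V A s t"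
  by (simp add: Paths_iff)

text \<open>Total versions of \<^const>\<open>rcol\<close> and \<^const>\<open>pstar\<close>: a square with sides \<open>x\<close>, \<open>b\<close> is
  completed by \<open>f x b\<close> and \<open>f b x\<close>; \<open>grid_bot f x bs\<close> is the edge opposite to \<open>x\<close> at the far end
  of the row of squares along \<open>bs\<close>.\<close>

fun grid_col :: "('b \<Rightarrow> 'b \<Rightarrow> 'b) \<Rightarrow> 'b \<Rightarrow> 'b list \<Rightarrow> 'b list" where
  "grid_col f x [] = []"
| "grid_col f x (b # bs) = f x b # grid_col f (f b x) bs"

fun grid_bot :: "('b \<Rightarrow> 'b \<Rightarrow> 'b) \<Rightarrow> 'b \<Rightarrow> 'b list \<Rightarrow> 'b" where
  "grid_bot f x [] = x"
| "grid_bot f x (b # bs) = grid_bot f (f b x) bs"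

fun grid :: "('b \<Rightarrow> 'b \<Rightarrow> 'b) \<Rightarrow> 'b list \<Rightarrow> 'b list \<Rightarrow> 'b list" where
  "grid f [] bs = bs"
| "grid f (a # as) bs = grid f as (grid_col f a bs)"

lemma grid_col_append: "grid_col f x (bs @ cs) = grid_col f x bs @ grid_col f (grid_bot f x bs) cs"
  by (induction bs arbitrary: x) auto

lemma grid_Nil_right [simp]: "grid f as [] = []"
  by (induction as) auto

lemma grid_append_left: "grid f (as @ as') bs = grid f as' (grid f as bs)"
  by (induction as arbitrary: bs) auto

lemma grid_Cons_right: "grid f bs (a # as) = grid_bot f a bs # grid f (grid_col f a bs) as"
  by (induction bs arbitrary: a as) auto

lemma grid_append_right: "grid f as (bs @ bs') = grid f as bs @ grid f (grid f bs as) bs'"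
proof (induction as arbitrary: bs bs')
  case Nil
  then show ?case by simp
next
  case (Cons a as)
  have "grid f (a # as) (bs @ bs') = grid f as (grid_col f a bs @ grid_col f (grid_bot f a bs) bs')"
    by (simp add: grid_col_append)
  also have "\<dots> = grid f as (grid_col f a bs) @
                  grid f (grid f (grid_col f a bs) as) (grid_col f (grid_bot f a bs) bs')"
    using Cons.IH by simp
  also have "\<dots> = grid f (a # as) bs @ grid f (grid f bs (a # as)) bs'"
    by (simp add: grid_Cons_right)
  finally show ?case .
qed

section \<open>Congruences on path categories\<close>

locale path_congruence =
  fixes V :: "'v set" and A :: "'a set" and s t :: "'a \<Rightarrow> 'v"
    and R :: "'v \<times> 'a list \<Rightarrow> 'v \<times> 'a list \<Rightarrow> bool"
  assumes R_refl: "p \<in> Paths V A s t \<Longrightarrow> R p p"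
    and R_sym: "\<lbrakk>R p q; p \<in> Paths V A s t; q \<in> Paths V A s t\<rbrakk> \<Longrightarrow> R q p"
    and R_trans: "\<lbrakk>R p q; R q r; p \<in> Paths V A s t; q \<in> Paths V A s t; r \<in> Paths V A s t\<rbrakk>
      \<Longrightarrow> R p r"
    and R_ends: "\<lbrakk>R (v, xs) (w, ys); (v, xs) \<in> Paths V A s t; (w, ys) \<in> Paths V A s t\<rbrakk>
      \<Longrightarrow> v = w \<and> ptgt t v xs = ptgt t w ys"
    and R_append: "\<lbrakk>R (v, xs) (v, ys); R (w, zs) (w, us);
      (v, xs) \<in> Paths V A s t; (v, ys) \<in> Paths V A s t;
      (w, zs) \<in> Paths V A s t; (w, us) \<in> Paths V A s t; ptgt t v xs = w\<rbrakk>
      \<Longrightarrow> R (v, xs @ zs) (v, ys @ us)"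
begin

abbreviation cls where "cls \<equiv> pcls (Paths V A s t) R"

abbreviation quot where "quot \<equiv> path_quot_cat V A s t R"

lemma quot_simps: "Ob quot = V" "Mor quot = cls ` Paths V A s t" "Idm quot v = cls (v, [])"
  by (simp_all add: path_quot_cat_def)

lemma R_append_right:
  "\<lbrakk>R (v, xs) (v, ys); (v, xs) \<in> Paths V A s t; (v, ys) \<in> Paths V A s t;
    (ptgt t v xs, zs) \<in> Paths V A s t\<rbrakk> \<Longrightarrow> R (v, xs @ zs) (v, ys @ zs)"
  using R_append R_refl by blast

lemma R_append_left:
  "\<lbrakk>R (w, xs) (w, ys); (v, ws) \<in> Paths V A s t; ptgt t v ws = w;
    (w, xs) \<in> Paths V A s t; (w, ys) \<in> Paths V A s t\<rbrakk> \<Longrightarrow> R (v, ws @ xs) (v, ws @ ys)"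
  using R_append R_refl by blast

lemma cls_eq_iff:
  assumes "p \<in> Paths V A s t" "q \<in> Paths V A s t"
  shows "cls p = cls q \<longleftrightarrow> R p q"
proof
  assume "cls p = cls q"
  then have "q \<in> cls p"
    using assms R_refl unfolding pcls_def by blast
  then show "R p q"
    unfolding pcls_def by blast
next
  assume "R p q"
  then show "cls p = cls q"
    using assms unfolding pcls_def by (blast intro: R_sym R_trans)
qed

lemma some_in_cls:
  assumes p: "(v, xs) \<in> Paths V A s t"
  obtains ys where "(SOME q. q \<in> cls (v, xs)) = (v, ys)" "(v, ys) \<in> Paths V A s t"
    "R (v, xs) (v, ys)" "ptgt t v ys = ptgt t v xs"
proof -
  have "(v, xs) \<in> cls (v, xs)"
    using p R_refl unfolding pcls_def by blast
  then have "(SOME q. q \<in> cls (v, xs)) \<in> cls (v, xs)"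
    by (rule someI)
  then show ?thesis
    using that R_ends[OF _ p] unfolding pcls_def by (metis (no_types, lifting) mem_Collect_eq prod.collapse)
qed

lemma Dom_Cod_cls:
  assumes "(v, xs) \<in> Paths V A s t"
  shows "Dom quot (cls (v, xs)) = v" "Cod quot (cls (v, xs)) = ptgt t v xs"
proof -
  obtain ys where "(SOME q. q \<in> cls (v, xs)) = (v, ys)" "ptgt t v ys = ptgt t v xs"
    using some_in_cls[OF assms] by blast
  then show "Dom quot (cls (v, xs)) = v" "Cod quot (cls (v, xs)) = ptgt t v xs"
    by (simp_all add: path_quot_cat_def)
qed

lemma Comp_cls:
  assumes p: "(u, xs) \<in> Paths V A s t" and q: "(v, ys) \<in> Paths V A s t" and uv: "ptgt t u xs = v"
  shows "Comp quot (cls (u, xs)) (cls (v, ys)) = cls (u, xs @ ys)"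
proof -
  obtain xs' where xs': "(SOME r. r \<in> cls (u, xs)) = (u, xs')" "(u, xs') \<in> Paths V A s t"
    "R (u, xs) (u, xs')" "ptgt t u xs' = ptgt t u xs"
    using some_in_cls[OF p] by blast
  obtain ys' where ys': "(SOME r. r \<in> cls (v, ys)) = (v, ys')" "(v, ys') \<in> Paths V A s t"
    "R (v, ys) (v, ys')"
    using some_in_cls[OF q] by blast
  have "R (u, xs @ ys) (u, xs' @ ys')"
    using R_append[OF xs'(3) ys'(3) p xs'(2) q ys'(2) uv] .
  moreover have "(u, xs @ ys) \<in> Paths V A s t" "(u, xs' @ ys') \<in> Paths V A s t"
    using p q xs' ys' uv by (auto simp: Paths_iff)
  ultimately have "cls (u, xs' @ ys') = cls (u, xs @ ys)"
    using cls_eq_iff R_sym by blast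
  with xs'(1) ys'(1) show ?thesis
    by (simp add: path_quot_cat_def)
qed

end

lemma path_congruence_cong:
  assumes R: "path_congruence V A s t R"
    and iff: "\<And>p q. p \<in> Paths V A s t \<Longrightarrow> q \<in> Paths V A s t \<Longrightarrow> R' p q \<longleftrightarrow> R p q"
  shows "path_congruence V A s t R'"
proof -
  interpret path_congruence V A s t R by (fact R)
  show ?thesis
  proof unfold_locales
    show "R' p p" if "p \<in> Paths V A s t" for p
      using R_refl[OF that] iff[OF that that] by simp
    show "R' q p" if "R' p q" "p \<in> Paths V A s t" "q \<in> Paths V A s t" for p q
      using R_sym[of p q] that iff[of p q] iff[of q p] by simp
    show "R' p r" if "R' p q" "R' q r" "p \<in> Paths V A s t" "q \<in> Paths V A s t"
      "r \<in> Paths V A s t" for p q r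
      using R_trans[of p q r] that iff[of p q] iff[of q r] iff[of p r] by simp
    show "v = w \<and> ptgt t v xs = ptgt t w ys"
      if "R' (v, xs) (w, ys)" "(v, xs) \<in> Paths V A s t" "(w, ys) \<in> Paths V A s t" for v xs w ys
      using R_ends[of v xs w ys] that iff[OF that(2,3)] by blast
    show "R' (v, xs @ zs) (v, ys @ us)"
      if "R' (v, xs) (v, ys)" "R' (w, zs) (w, us)" "(v, xs) \<in> Paths V A s t"
        "(v, ys) \<in> Paths V A s t" "(w, zs) \<in> Paths V A s t" "(w, us) \<in> Paths V A s t"
        "ptgt t v xs = w" for v xs ys w zs us
    proof -
      have R: "R (v, xs) (v, ys)" "R (w, zs) (w, us)"
        using that iff by simp_all
      have "ptgt t v ys = w"
        using R_ends[OF R(1) that(3,4)] that(7) by simp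
      then have "(v, xs @ zs) \<in> Paths V A s t" "(v, ys @ us) \<in> Paths V A s t"
        using Paths_append[of v xs] Paths_append[of v ys] that by simp_all
      with R show ?thesis
        using R_append[of v xs ys w zs us] that iff[of "(v, xs @ zs)" "(v, ys @ us)"] by simp
    qed
  qed
qed

lemma path_congruence_pullback:
  assumes R: "path_congruence V A2 s2 t2 R"
    and h_Paths: "\<And>v xs. (v, xs) \<in> Paths V A1 s1 t1 \<Longrightarrow>
      (v, h xs) \<in> Paths V A2 s2 t2 \<and> ptgt t2 v (h xs) = ptgt t1 v xs"
    and h_append: "\<And>xs ys. h (xs @ ys) = h xs @ h ys"
  shows "path_congruence V A1 s1 t1 (\<lambda>p q. R (fst p, h (snd p)) (fst q, h (snd q)))"
proof -
  interpret R: path_congruence V A2 s2 t2 R by (fact R)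
  have h_Paths': "(fst p, h (snd p)) \<in> Paths V A2 s2 t2" if "p \<in> Paths V A1 s1 t1" for p
    using h_Paths[of "fst p" "snd p"] that by simp
  show ?thesis
  proof unfold_locales
    fix v xs w ys
    assume "R (fst (v, xs), h (snd (v, xs))) (fst (w, ys), h (snd (w, ys)))"
      and "(v, xs) \<in> Paths V A1 s1 t1" "(w, ys) \<in> Paths V A1 s1 t1"
    then show "v = w \<and> ptgt t1 v xs = ptgt t1 w ys"
      using R.R_ends h_Paths by fastforce
  next
    fix v xs ys w zs us
    assume "R (fst (v, xs), h (snd (v, xs))) (fst (v, ys), h (snd (v, ys)))"
      and "R (fst (w, zs), h (snd (w, zs))) (fst (w, us), h (snd (w, us)))"
      and "(v, xs) \<in> Paths V A1 s1 t1" "(v, ys) \<in> Paths V A1 s1 t1"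
      and "(w, zs) \<in> Paths V A1 s1 t1" "(w, us) \<in> Paths V A1 s1 t1" "ptgt t1 v xs = w"
    then show "R (fst (v, xs @ zs), h (snd (v, xs @ zs))) (fst (v, ys @ us), h (snd (v, ys @ us)))"
      using R.R_append h_Paths by (simp add: h_append)
  qed (use R.R_refl R.R_sym R.R_trans h_Paths' in blast)+
qed

locale path_rewriting =
  fixes V :: "'v set" and A :: "'a set" and s t :: "'a \<Rightarrow> 'v"
    and S :: "'v \<times> 'a list \<Rightarrow> 'v \<times> 'a list \<Rightarrow> bool"
  assumes S_Paths: "S (v, xs) (w, ys) \<Longrightarrow>
      (v, xs) \<in> Paths V A s t \<and> (w, ys) \<in> Paths V A s t \<and> v = w \<and> ptgt t v xs = ptgt t w ys"
    and S_context: "\<lbrakk>S (v, xs) (v, ys); (u, ws @ xs @ zs) \<in> Paths V A s t; ptgt t u ws = v\<rbrakk> \<Longrightarrow>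
      S (u, ws @ xs @ zs) (u, ws @ ys @ zs)"
begin

lemma S_ends:
  "S q r \<or> S r q \<Longrightarrow>
    q \<in> Paths V A s t \<and> r \<in> Paths V A s t \<and> fst q = fst r \<and>
    ptgt t (fst q) (snd q) = ptgt t (fst r) (snd r)"
  using S_Paths[of "fst q" "snd q" "fst r" "snd r"] S_Paths[of "fst r" "snd r" "fst q" "snd q"]
  by auto

lemma equivclp_ends:
  "equivclp S p q \<Longrightarrow>
    p = q \<or> (p \<in> Paths V A s t \<and> q \<in> Paths V A s t \<and> fst p = fst q \<and>
      ptgt t (fst p) (snd p) = ptgt t (fst q) (snd q))"
proof (induction rule: equivclp_induct)
  case (step q r)
  with S_ends[OF step.hyps(2)] show ?case
    by metis
qed simp

lemma equivclp_context:
  assumes "equivclp S (v, xs) q" "(u, ws @ xs @ zs) \<in> Paths V A s t" "ptgt t u ws = v"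
  shows "equivclp S (u, ws @ xs @ zs) (u, ws @ snd q @ zs)"
  using assms(1)
proof (induction rule: equivclp_induct)
  case (step q r)
  obtain w ys w' ys' where qr: "q = (w, ys)" "r = (w', ys')"
    by fastforce
  have q: "w = v" "ptgt t v ys = ptgt t v xs" "(u, ws @ ys @ zs) \<in> Paths V A s t"
    using equivclp_ends[OF step.hyps(1)] assms(2,3) qr by (auto simp: Paths_iff)
  have r: "w' = v" "(u, ws @ ys' @ zs) \<in> Paths V A s t"
    using S_ends[OF step.hyps(2)] q qr assms(3) by (auto simp: Paths_iff)
  have "S (u, ws @ ys @ zs) (u, ws @ ys' @ zs) \<or> S (u, ws @ ys' @ zs) (u, ws @ ys @ zs)"
    using step.hyps(2) S_context q r qr assms(3) by blast
  then show ?case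
    using equivclp_into_equivclp[OF step.IH] qr by simp
qed simp

sublocale path_congruence V A s t "equivclp S"
proof unfold_locales
  fix v xs w ys
  assume "equivclp S (v, xs) (w, ys)"
  then show "v = w \<and> ptgt t v xs = ptgt t w ys"
    using equivclp_ends by fastforce
next
  fix v xs ys w zs us
  assume xy: "equivclp S (v, xs) (v, ys)" and zu: "equivclp S (w, zs) (w, us)"
    and P: "(v, xs) \<in> Paths V A s t" "(v, ys) \<in> Paths V A s t" "(w, zs) \<in> Paths V A s t"
    and w: "ptgt t v xs = w"
  have "ptgt t v ys = w"
    using equivclp_ends[OF xy] w by auto
  then have "equivclp S (v, ys @ zs @ []) (v, ys @ us @ [])"
    using equivclp_context[OF zu, of v ys "[]"] P by (simp add: Paths_iff)
  moreover have "equivclp S (v, [] @ xs @ zs) (v, [] @ ys @ zs)"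
    using equivclp_context[OF xy, of v "[]" zs] P w by (simp add: Paths_iff)
  ultimately show "equivclp S (v, xs @ zs) (v, ys @ us)"
    using equivclp_trans by fastforce
qed (auto intro: equivclp_sym equivclp_trans)

end

locale path_quot_iso = Q2: path_congruence V A2 s2 t2 R2
  for V :: "'v set" and A2 :: "'b set" and s2 t2 :: "'b \<Rightarrow> 'v" and R2 +
  fixes A1 :: "'a set" and s1 t1 :: "'a \<Rightarrow> 'v" and R1 :: "'v \<times> 'a list \<Rightarrow> 'v \<times> 'a list \<Rightarrow> bool"
    and h :: "'a list \<Rightarrow> 'b list"
  assumes h_Paths: "(v, xs) \<in> Paths V A1 s1 t1 \<Longrightarrow>
      (v, h xs) \<in> Paths V A2 s2 t2 \<and> ptgt t2 v (h xs) = ptgt t1 v xs"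
    and h_append: "h (xs @ ys) = h xs @ h ys"
    and h_surj: "(v, bs) \<in> Paths V A2 s2 t2 \<Longrightarrow> \<exists>as. (v, as) \<in> Paths V A1 s1 t1 \<and> h as = bs"
    and R_iff: "\<lbrakk>p \<in> Paths V A1 s1 t1; q \<in> Paths V A1 s1 t1\<rbrakk> \<Longrightarrow>
      R1 p q \<longleftrightarrow> R2 (fst p, h (snd p)) (fst q, h (snd q))"
begin

sublocale Q1: path_congruence V A1 s1 t1 R1
proof -
  have "path_congruence V A1 s1 t1 (\<lambda>p q. R2 (fst p, h (snd p)) (fst q, h (snd q)))"
    by (rule path_congruence_pullback[OF Q2.path_congruence_axioms]) (use h_Paths h_append in auto)
  then show "path_congruence V A1 s1 t1 R1"
    by (rule path_congruence_cong) (rule R_iff)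
qed

lemma h_Nil: "h [] = []"
  using h_append[of "[]" "[]"] by simp

definition map_cls :: "('v \<times> 'a list) set \<Rightarrow> ('v \<times> 'b list) set" where
  "map_cls X = Q2.cls (fst (SOME p. p \<in> X), h (snd (SOME p. p \<in> X)))"

lemma map_cls_cls:
  assumes p: "(v, xs) \<in> Paths V A1 s1 t1"
  shows "map_cls (Q1.cls (v, xs)) = Q2.cls (v, h xs)"
proof -
  obtain ys where ys: "(SOME q. q \<in> Q1.cls (v, xs)) = (v, ys)" "(v, ys) \<in> Paths V A1 s1 t1"
    "R1 (v, xs) (v, ys)"
    using Q1.some_in_cls[OF p] by blast
  then have "R2 (v, h xs) (v, h ys)"
    using R_iff p by auto
  then show ?thesis
    unfolding map_cls_def ys(1) using Q2.cls_eq_iff Q2.R_sym h_Paths p ys(2) by auto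
qed

lemma bij_betw_map_cls: "bij_betw map_cls (Mor Q1.quot) (Mor Q2.quot)"
  unfolding Q1.quot_simps Q2.quot_simps
proof (rule bij_betw_imageI)
  show "inj_on map_cls (Q1.cls ` Paths V A1 s1 t1)"
  proof (rule inj_onI, clarify)
    fix v xs w ys
    assume p: "(v, xs) \<in> Paths V A1 s1 t1" and q: "(w, ys) \<in> Paths V A1 s1 t1"
      and "map_cls (Q1.cls (v, xs)) = map_cls (Q1.cls (w, ys))"
    then have "R2 (v, h xs) (w, h ys)"
      using map_cls_cls Q2.cls_eq_iff h_Paths by metis
    then show "Q1.cls (v, xs) = Q1.cls (w, ys)"
      using Q1.cls_eq_iff R_iff p q by simp
  qed
  show "map_cls ` Q1.cls ` Paths V A1 s1 t1 = Q2.cls ` Paths V A2 s2 t2"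
  proof (intro equalityI subsetI)
    fix Y assume "Y \<in> map_cls ` Q1.cls ` Paths V A1 s1 t1"
    then show "Y \<in> Q2.cls ` Paths V A2 s2 t2"
      using map_cls_cls h_Paths by auto
  next
    fix Y assume "Y \<in> Q2.cls ` Paths V A2 s2 t2"
    then obtain v ys where "Y = Q2.cls (v, ys)" "(v, ys) \<in> Paths V A2 s2 t2"
      by auto
    then show "Y \<in> map_cls ` Q1.cls ` Paths V A1 s1 t1"
      using h_surj map_cls_cls by (metis image_eqI)
  qed
qed

lemma map_cls_Comp:
  assumes p: "(u, xs) \<in> Paths V A1 s1 t1" and q: "(v, ys) \<in> Paths V A1 s1 t1"
    and uv: "ptgt t1 u xs = v"
  shows "map_cls (Comp Q1.quot (Q1.cls (u, xs)) (Q1.cls (v, ys))) =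
    Comp Q2.quot (map_cls (Q1.cls (u, xs))) (map_cls (Q1.cls (v, ys)))"
  using Q1.Comp_cls[OF p q uv] Q2.Comp_cls h_Paths[OF p] h_Paths[OF q] uv
    map_cls_cls[OF p] map_cls_cls[OF q] map_cls_cls[OF Paths_append] p q
  by (simp add: h_append)

lemma cat_iso_quot: "cat_iso Q1.quot Q2.quot"
proof -
  have "\<forall>f\<in>Mor Q1.quot. Dom Q2.quot (map_cls f) = id (Dom Q1.quot f) \<and>
      Cod Q2.quot (map_cls f) = id (Cod Q1.quot f)"
    using map_cls_cls h_Paths by (auto simp: Q1.quot_simps Q1.Dom_Cod_cls Q2.Dom_Cod_cls)
  moreover have "\<forall>v\<in>Ob Q1.quot. map_cls (Idm Q1.quot v) = Idm Q2.quot (id v)"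
    using map_cls_cls h_Nil by (simp add: Q1.quot_simps Q2.quot_simps Paths_iff)
  moreover have "\<forall>f\<in>Mor Q1.quot. \<forall>g\<in>Mor Q1.quot. Cod Q1.quot f = Dom Q1.quot g \<longrightarrow>
      map_cls (Comp Q1.quot f g) = Comp Q2.quot (map_cls f) (map_cls g)"
    using map_cls_Comp by (auto simp: Q1.quot_simps Q1.Dom_Cod_cls)
  ultimately show ?thesis
    unfolding cat_iso_def using bij_betw_map_cls
    by (intro exI[of _ id] exI[of _ map_cls]) (simp add: Q1.quot_simps Q2.quot_simps)
qed

end

section \<open>Weak RC-systems with a unit family\<close>

text \<open>The operation \<open>\<star>\<close> is total on pairs of arrows with a common source, as in a completion;
  \<open>op\<close> is its partial form as used by \<^const>\<open>rc_equiv\<close>, and \<open>eps\<close> is the unit family.\<close>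

locale weak_rc_system =
  fixes V :: "'v set" and B :: "'b set" and src tgt :: "'b \<Rightarrow> 'v"
    and op :: "'b \<Rightarrow> 'b \<Rightarrow> 'b option" and star :: "'b \<Rightarrow> 'b \<Rightarrow> 'b" (infixl "\<star>" 70)
    and eps :: "'v \<Rightarrow> 'b"
  assumes arrow_ends: "x \<in> B \<Longrightarrow> src x \<in> V \<and> tgt x \<in> V"
    and op_star: "\<lbrakk>x \<in> B; y \<in> B; src x = src y\<rbrakk> \<Longrightarrow> op x y = Some (x \<star> y)"
    and star_closed: "\<lbrakk>x \<in> B; y \<in> B; src x = src y\<rbrakk> \<Longrightarrow>
      x \<star> y \<in> B \<and> src (x \<star> y) = tgt x \<and> tgt (x \<star> y) = tgt (y \<star> x)"
    and rc_law: "\<lbrakk>x \<in> B; y \<in> B; z \<in> B; src x = src y; src x = src z\<rbrakk> \<Longrightarrow>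
      (x \<star> y) \<star> (x \<star> z) = (y \<star> x) \<star> (y \<star> z)"
    and eps_loop: "v \<in> V \<Longrightarrow> eps v \<in> B \<and> src (eps v) = v \<and> tgt (eps v) = v"
    and eps_star: "x \<in> B \<Longrightarrow> eps (src x) \<star> x = x"
    and star_eps: "x \<in> B \<Longrightarrow> x \<star> eps (src x) = eps (tgt x)"
    and star_self: "x \<in> B \<Longrightarrow> x \<star> x = eps (tgt x)"
begin

definition is_path :: "'v \<Rightarrow> 'b list \<Rightarrow> bool" where
  "is_path v xs \<longleftrightarrow> set xs \<subseteq> B \<and> path_ok src tgt v xs"

lemma is_path_simps [simp]:
  "is_path v []"
  "is_path v (x # xs) \<longleftrightarrow> x \<in> B \<and> src x = v \<and> is_path (tgt x) xs"
  "is_path v (xs @ ys) \<longleftrightarrow> is_path v xs \<and> is_path (ptgt tgt v xs) ys"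
  unfolding is_path_def by auto

lemma Paths_iff_is_path: "(v, xs) \<in> Paths V B src tgt \<longleftrightarrow> v \<in> V \<and> is_path v xs"
  unfolding Paths_iff is_path_def by auto

lemma ptgt_in_V: "v \<in> V \<Longrightarrow> is_path v xs \<Longrightarrow> ptgt tgt v xs \<in> V"
  by (induction xs arbitrary: v) (auto dest: arrow_ends)

abbreviation col :: "'b \<Rightarrow> 'b list \<Rightarrow> 'b list" where
  "col \<equiv> grid_col (\<star>)"

abbreviation bot :: "'b \<Rightarrow> 'b list \<Rightarrow> 'b" where
  "bot \<equiv> grid_bot (\<star>)"

abbreviation grid_star :: "'b list \<Rightarrow> 'b list \<Rightarrow> 'b list" (infixl "\<star>\<star>" 70) where
  "as \<star>\<star> bs \<equiv> grid (\<star>) as bs"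

abbreviation unit_path :: "'b list \<Rightarrow> bool" where
  "unit_path xs \<equiv> set xs \<subseteq> eps ` V"

lemma is_path_col:
  assumes "x \<in> B" "is_path (src x) bs"
  shows "is_path (tgt x) (col x bs) \<and> bot x bs \<in> B \<and> src (bot x bs) = ptgt tgt (src x) bs \<and>
    tgt (bot x bs) = ptgt tgt (tgt x) (col x bs)"
  using assms
proof (induction bs arbitrary: x)
  case (Cons b bs)
  then have "x \<star> b \<in> B" "src (x \<star> b) = tgt x" "tgt (x \<star> b) = tgt (b \<star> x)"
    "b \<star> x \<in> B" "src (b \<star> x) = tgt b"
    using star_closed[of x b] star_closed[of b x] by auto
  with Cons.prems Cons.IH[of "b \<star> x"] show ?case
    by auto
qed simp

lemma grid_paths:
  assumes "is_path v as" "is_path v bs"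
  shows "is_path (ptgt tgt v as) (as \<star>\<star> bs) \<and>
    ptgt tgt (ptgt tgt v as) (as \<star>\<star> bs) = ptgt tgt (ptgt tgt v bs) (bs \<star>\<star> as)"
  using assms
proof (induction as arbitrary: v bs)
  case (Cons a as)
  then have "is_path (tgt a) (col a bs)" "bot a bs \<in> B" "src (bot a bs) = ptgt tgt v bs"
    "tgt (bot a bs) = ptgt tgt (tgt a) (col a bs)"
    using is_path_col[of a bs] by auto
  with Cons.prems Cons.IH[of "tgt a" "col a bs"] show ?case
    by (simp add: grid_Cons_right)
qed simp

lemma is_path_grid: "is_path v as \<Longrightarrow> is_path v bs \<Longrightarrow> is_path (ptgt tgt v as) (as \<star>\<star> bs)"
  using grid_paths by blast

lemma ptgt_grid: "is_path v as \<Longrightarrow> is_path v bs \<Longrightarrow>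
  ptgt tgt (ptgt tgt v as) (as \<star>\<star> bs) = ptgt tgt (ptgt tgt v bs) (bs \<star>\<star> as)"
  using grid_paths by blast

lemma ptgt_unit_path: "is_path v es \<Longrightarrow> unit_path es \<Longrightarrow> ptgt tgt v es = v"
  by (induction es arbitrary: v) (auto dest: eps_loop)

lemma col_unit_path:
  assumes "x \<in> B" "is_path (src x) es" "unit_path es"
  shows "unit_path (col x es) \<and> bot x es = x"
  using assms
proof (induction es arbitrary: x)
  case (Cons e es)
  then obtain w where "e = eps w" "w \<in> V" "src x = w" "tgt e = w"
    using eps_loop by force
  moreover have "tgt x \<in> V"
    using arrow_ends Cons.prems by blast
  ultimately show ?case
    using Cons.prems Cons.IH[of x] star_eps eps_star by auto
qed simp

lemma unit_path_grid: "is_path v as \<Longrightarrow> is_path v es \<Longrightarrow> unit_path es \<Longrightarrow> unit_path (as \<star>\<star> es)"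
proof (induction as arbitrary: v es)
  case (Cons a as)
  then show ?case
    using col_unit_path[of a es] is_path_col[of a es] Cons.IH[of "tgt a" "col a es"] by simp
qed simp

lemma col_eps: "is_path v bs \<Longrightarrow> col (eps v) bs = bs \<and> bot (eps v) bs = eps (ptgt tgt v bs)"
  by (induction bs arbitrary: v) (auto simp: eps_star star_eps)

lemma grid_unit_left: "is_path v es \<Longrightarrow> unit_path es \<Longrightarrow> is_path v bs \<Longrightarrow> es \<star>\<star> bs = bs"
proof (induction es arbitrary: v bs)
  case (Cons e es)
  then have "e = eps v" "tgt e = v"
    using eps_loop by force+
  with Cons.prems Cons.IH[of v bs] show ?case
    using col_eps by simp
qed simp

lemma unit_path_grid_self: "is_path v as \<Longrightarrow> unit_path (as \<star>\<star> as)"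
proof (induction as arbitrary: v)
  case (Cons a as)
  then have "tgt a \<in> V" "ptgt tgt (tgt a) as \<in> V"
    using arrow_ends ptgt_in_V by auto
  moreover have "(a # as) \<star>\<star> (a # as) = eps (ptgt tgt (tgt a) as) # as \<star>\<star> as"
    using Cons.prems col_eps[of "tgt a" as] by (simp add: star_self grid_Cons_right)
  ultimately show ?case
    using Cons by auto
qed simp

lemma col_rc_law:
  "\<lbrakk>x \<in> B; y \<in> B; src x = src y; is_path (src x) cs\<rbrakk> \<Longrightarrow>
    col (x \<star> y) (col x cs) = col (y \<star> x) (col y cs)"
proof (induction cs arbitrary: x y)
  case (Cons c cs)
  then have "c \<star> x \<in> B" "c \<star> y \<in> B" "src (c \<star> x) = tgt c" "src (c \<star> y) = tgt c"
    using star_closed[of c x] star_closed[of c y] by auto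
  then have "col ((c \<star> x) \<star> (c \<star> y)) (col (c \<star> x) cs) = col ((c \<star> y) \<star> (c \<star> x)) (col (c \<star> y) cs)"
    using Cons.IH Cons.prems by simp
  moreover have "(x \<star> y) \<star> (x \<star> c) = (y \<star> x) \<star> (y \<star> c)" "(x \<star> c) \<star> (x \<star> y) = (c \<star> x) \<star> (c \<star> y)"
    "(y \<star> c) \<star> (y \<star> x) = (c \<star> y) \<star> (c \<star> x)"
    using rc_law Cons.prems by simp_all
  ultimately show ?case
    by simp
qed simp

lemma grid_col_col:
  "\<lbrakk>x \<in> B; is_path (src x) bs; is_path (src x) cs\<rbrakk> \<Longrightarrow>
    col x bs \<star>\<star> col x cs = [bot x bs] \<star>\<star> (bs \<star>\<star> cs)"
proof (induction bs arbitrary: x cs)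
  case (Cons b bs)
  then have "b \<star> x \<in> B" "src (b \<star> x) = tgt b" "is_path (tgt b) (col b cs)"
    using star_closed[of b x] is_path_col[of b cs] by auto
  then have "col (b \<star> x) bs \<star>\<star> col (b \<star> x) (col b cs) = [bot (b \<star> x) bs] \<star>\<star> (bs \<star>\<star> col b cs)"
    using Cons by simp
  with Cons.prems col_rc_law[of x b cs] show ?case
    by simp
qed simp

text \<open>The RC-law for paths: both sides fill the same three-dimensional grid.\<close>

lemma grid_rc_law:
  "\<lbrakk>is_path v as; is_path v bs; is_path v cs\<rbrakk> \<Longrightarrow>
    (as \<star>\<star> bs) \<star>\<star> (as \<star>\<star> cs) = (bs \<star>\<star> as) \<star>\<star> (bs \<star>\<star> cs)"
proof (induction as arbitrary: v bs cs)
  case (Cons a as)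
  then have "is_path (tgt a) (col a bs)" "is_path (tgt a) (col a cs)"
    using is_path_col[of a bs] is_path_col[of a cs] by auto
  with Cons have "((a # as) \<star>\<star> bs) \<star>\<star> ((a # as) \<star>\<star> cs) =
      (col a bs \<star>\<star> as) \<star>\<star> (col a bs \<star>\<star> col a cs)"
    using Cons.IH[of "tgt a" "col a bs" "col a cs"] by simp
  also have "\<dots> = (col a bs \<star>\<star> as) \<star>\<star> ([bot a bs] \<star>\<star> (bs \<star>\<star> cs))"
    using Cons.prems grid_col_col[of a bs cs] by simp
  also have "\<dots> = (bs \<star>\<star> (a # as)) \<star>\<star> (bs \<star>\<star> cs)"
    by (simp add: grid_Cons_right)
  finally show ?case .
qed simp

definition path_equiv :: "'b list \<Rightarrow> 'b list \<Rightarrow> bool" where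
  "path_equiv as bs \<longleftrightarrow> unit_path (as \<star>\<star> bs) \<and> unit_path (bs \<star>\<star> as)"

lemma path_equiv_refl: "is_path v as \<Longrightarrow> path_equiv as as"
  unfolding path_equiv_def using unit_path_grid_self by blast

lemma path_equiv_sym: "path_equiv as bs \<Longrightarrow> path_equiv bs as"
  unfolding path_equiv_def by simp

lemma path_equiv_ptgt:
  "\<lbrakk>is_path v as; is_path v bs; path_equiv as bs\<rbrakk> \<Longrightarrow> ptgt tgt v as = ptgt tgt v bs"
  unfolding path_equiv_def by (metis is_path_grid ptgt_grid ptgt_unit_path)

text \<open>Transitivity is the RC-law for paths, with the unit paths \<open>\<alpha> \<star> \<beta>\<close> and \<open>\<beta> \<star> \<alpha>\<close> cancelled.\<close>

lemma unit_path_grid_trans: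
  assumes "is_path v as" "is_path v bs" "is_path v cs" "path_equiv as bs" "path_equiv bs cs"
  shows "unit_path (as \<star>\<star> cs)"
proof -
  have "as \<star>\<star> cs = (as \<star>\<star> bs) \<star>\<star> (as \<star>\<star> cs)"
    using assms grid_unit_left[of "ptgt tgt v as" "as \<star>\<star> bs" "as \<star>\<star> cs"] is_path_grid
    unfolding path_equiv_def by auto
  also have "\<dots> = (bs \<star>\<star> as) \<star>\<star> (bs \<star>\<star> cs)"
    using assms grid_rc_law by blast
  also have "\<dots> = bs \<star>\<star> cs"
    using assms grid_unit_left[of "ptgt tgt v bs" "bs \<star>\<star> as" "bs \<star>\<star> cs"] is_path_grid
    unfolding path_equiv_def by auto
  finally show ?thesis
    using assms(5) unfolding path_equiv_def by simp
qed

lemma path_equiv_trans: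
  "\<lbrakk>is_path v as; is_path v bs; is_path v cs; path_equiv as bs; path_equiv bs cs\<rbrakk> \<Longrightarrow>
    path_equiv as cs"
  using unit_path_grid_trans[of v as bs cs] unit_path_grid_trans[of v cs bs as]
  unfolding path_equiv_def by (simp add: path_equiv_sym)

lemma unit_path_grid_append_right:
  assumes "is_path v as" "is_path v bs" "path_equiv as bs" "is_path (ptgt tgt v as) cs"
  shows "unit_path ((as @ cs) \<star>\<star> (bs @ cs))"
proof -
  let ?X = "as \<star>\<star> bs" and ?Y = "bs \<star>\<star> as"
  have X: "is_path (ptgt tgt v as) ?X" "unit_path ?X" and Y: "is_path (ptgt tgt v bs) ?Y" "unit_path ?Y"
    using assms is_path_grid unfolding path_equiv_def by auto
  have "(as @ cs) \<star>\<star> (bs @ cs) = cs \<star>\<star> (?X @ ?Y \<star>\<star> cs)"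
    by (simp add: grid_append_left grid_append_right)
  also have "\<dots> = cs \<star>\<star> (?X @ cs)"
    using grid_unit_left[OF Y] assms path_equiv_ptgt by simp
  also have "\<dots> = cs \<star>\<star> ?X @ cs \<star>\<star> cs"
    using grid_unit_left[OF X] assms by (simp add: grid_append_right)
  finally show ?thesis
    using unit_path_grid[OF assms(4) X] unit_path_grid_self[OF assms(4)] by simp
qed

lemma path_equiv_append_right:
  "\<lbrakk>is_path v as; is_path v bs; path_equiv as bs; is_path (ptgt tgt v as) cs\<rbrakk> \<Longrightarrow>
    path_equiv (as @ cs) (bs @ cs)"
  using unit_path_grid_append_right[of v as bs cs] unit_path_grid_append_right[of v bs as cs]
    path_equiv_ptgt[of v as bs] unfolding path_equiv_def by auto

lemma unit_path_grid_append_left: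
  assumes "is_path v cs" "is_path (ptgt tgt v cs) as" "is_path (ptgt tgt v cs) bs" "path_equiv as bs"
  shows "unit_path ((cs @ as) \<star>\<star> (cs @ bs))"
proof -
  let ?E = "cs \<star>\<star> cs"
  have E: "is_path (ptgt tgt v cs) ?E" "unit_path ?E"
    using is_path_grid unit_path_grid_self assms by auto
  have "(cs @ as) \<star>\<star> (cs @ bs) = as \<star>\<star> (?E @ ?E \<star>\<star> bs)"
    by (simp add: grid_append_left grid_append_right)
  also have "\<dots> = as \<star>\<star> (?E @ bs)"
    using grid_unit_left[OF E] assms by simp
  also have "\<dots> = as \<star>\<star> ?E @ as \<star>\<star> bs"
    using grid_unit_left[OF E] assms by (simp add: grid_append_right)
  finally show ?thesis
    using unit_path_grid[OF assms(2) E] assms(4) unfolding path_equiv_def by simp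
qed

lemma path_equiv_append_left:
  "\<lbrakk>is_path v cs; is_path (ptgt tgt v cs) as; is_path (ptgt tgt v cs) bs; path_equiv as bs\<rbrakk> \<Longrightarrow>
    path_equiv (cs @ as) (cs @ bs)"
  using unit_path_grid_append_left[of v cs as bs] unit_path_grid_append_left[of v cs bs as]
  unfolding path_equiv_def by (simp add: path_equiv_sym)

lemma path_equiv_eps_Cons: "v \<in> V \<Longrightarrow> is_path v bs \<Longrightarrow> path_equiv (eps v # bs) bs"
  unfolding path_equiv_def
  using col_eps[of v bs] unit_path_grid_self[of v bs] ptgt_in_V[of v bs]
  by (simp add: grid_Cons_right)

lemma unit_path_grid_square:
  assumes "is_path v as" "is_path v bs"
  shows "unit_path ((as @ as \<star>\<star> bs) \<star>\<star> (bs @ bs \<star>\<star> as))"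
proof -
  let ?X = "as \<star>\<star> bs" and ?Y = "bs \<star>\<star> as"
  have X: "is_path (ptgt tgt v as) ?X" and Y: "is_path (ptgt tgt v bs) ?Y"
    using assms is_path_grid by blast+
  have XY: "ptgt tgt (ptgt tgt v as) ?X = ptgt tgt (ptgt tgt v bs) ?Y"
    using assms ptgt_grid by blast
  have "(as @ ?X) \<star>\<star> (bs @ ?Y) = ?X \<star>\<star> ?X @ (?X \<star>\<star> ?X) \<star>\<star> (?Y \<star>\<star> ?Y)"
    by (simp add: grid_append_left grid_append_right)
  then show ?thesis
    using unit_path_grid[OF is_path_grid[OF X X]] is_path_grid[OF Y Y] XY
      unit_path_grid_self[OF X] unit_path_grid_self[OF Y] by simp
qed

lemma path_equiv_grid_square:
  "is_path v as \<Longrightarrow> is_path v bs \<Longrightarrow> path_equiv (as @ as \<star>\<star> bs) (bs @ bs \<star>\<star> as)"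
  using unit_path_grid_square[of v as bs] unit_path_grid_square[of v bs as]
  unfolding path_equiv_def by simp

lemma rcol_op: "x \<in> B \<Longrightarrow> is_path (src x) bs \<Longrightarrow> rcol op x bs = Some (col x bs)"
proof (induction bs arbitrary: x)
  case (Cons b bs)
  then have "b \<star> x \<in> B" "src (b \<star> x) = tgt b"
    using star_closed[of b x] by auto
  with Cons.prems Cons.IH[of "b \<star> x"] show ?case
    using op_star[of x b] op_star[of b x] by simp
qed simp

lemma pstar_op: "is_path v as \<Longrightarrow> is_path v bs \<Longrightarrow> pstar op as bs = Some (as \<star>\<star> bs)"
proof (induction as arbitrary: v bs)
  case (Cons a as)
  then show ?case
    using rcol_op[of a bs] is_path_col[of a bs] Cons.IH[of "tgt a" "col a bs"] by simp
qed simp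

lemma rc_equiv_iff_path_equiv:
  "is_path v as \<Longrightarrow> is_path w bs \<Longrightarrow> rc_equiv V op eps (v, as) (w, bs) \<longleftrightarrow> v = w \<and> path_equiv as bs"
  unfolding rc_equiv_def path_equiv_def using pstar_op by auto

end

section \<open>Involutive left-non-degenerate Yang--Baxter maps\<close>

fun strip_units :: "('a + 'v) list \<Rightarrow> 'a list" where
  "strip_units [] = []"
| "strip_units (Inl a # xs) = a # strip_units xs"
| "strip_units (Inr v # xs) = strip_units xs"

lemma strip_units_append [simp]: "strip_units (xs @ ys) = strip_units xs @ strip_units ys"
  by (induction xs rule: strip_units.induct) auto

lemma strip_units_map_Inl [simp]: "strip_units (map Inl xs) = xs"
  by (induction xs) auto

lemma strip_units_Inr: "set xs \<subseteq> Inr ` W \<Longrightarrow> strip_units xs = []"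
  by (induction xs rule: strip_units.induct) auto

locale yang_baxter =
  fixes V :: "'v set" and A :: "'a set" and s t :: "'a \<Rightarrow> 'v"
    and lact ract :: "'a \<Rightarrow> 'a \<Rightarrow> 'a"
  assumes yb_map: "qYB_map V A s t lact ract"
    and involutive: "qYB_involutive A s t lact ract"
    and left_nondeg: "qYB_left_nondeg A s t lact"
begin

lemma arrow_ends: "x \<in> A \<Longrightarrow> s x \<in> V \<and> t x \<in> V"
  using yb_map unfolding qYB_map_def by blast

lemma sigma_closed: "\<lbrakk>x \<in> A; y \<in> A; t x = s y\<rbrakk> \<Longrightarrow>
    lact x y \<in> A \<and> ract x y \<in> A \<and> s (lact x y) = s x \<and> t (lact x y) = s (ract x y) \<and>
    t (ract x y) = t y"
  using yb_map unfolding qYB_map_def by blast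

lemma lact_braid: "\<lbrakk>x \<in> A; y \<in> A; z \<in> A; t x = s y; t y = s z\<rbrakk> \<Longrightarrow>
    lact (lact x y) (lact (ract x y) z) = lact x (lact y z)"
  using yb_map unfolding qYB_map_def Let_def by fastforce

lemma sigma_involutive: "\<lbrakk>x \<in> A; y \<in> A; t x = s y\<rbrakk> \<Longrightarrow>
    lact (lact x y) (ract x y) = x \<and> ract (lact x y) (ract x y) = y"
  using involutive unfolding qYB_involutive_def by blast

definition lact_inv :: "'a \<Rightarrow> 'a \<Rightarrow> 'a" where
  "lact_inv a b = (THE z. z \<in> A \<and> s z = t a \<and> lact a z = b)"

lemma lact_lact_inv:
  assumes "a \<in> A" "b \<in> A" "s a = s b"
  shows "lact_inv a b \<in> A \<and> s (lact_inv a b) = t a \<and> lact a (lact_inv a b) = b"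
proof -
  have bij: "bij_betw (lact a) {y \<in> A. s y = t a} {y \<in> A. s y = s a}"
    using left_nondeg assms(1) unfolding qYB_left_nondeg_def by blast
  then have "b \<in> lact a ` {y \<in> A. s y = t a}"
    using assms unfolding bij_betw_def by auto
  then obtain z where z: "z \<in> A" "s z = t a" "lact a z = b"
    by auto
  have "\<exists>!z. z \<in> A \<and> s z = t a \<and> lact a z = b"
    using z bij unfolding bij_betw_def inj_on_def by blast
  then show ?thesis
    unfolding lact_inv_def by (rule theI')
qed

lemma lact_inv_lact:
  assumes "a \<in> A" "z \<in> A" "s z = t a"
  shows "lact_inv a (lact a z) = z"
proof -
  have "lact a z \<in> A" "s (lact a z) = s a"
    using sigma_closed assms by auto
  then have "lact_inv a (lact a z) \<in> A" "s (lact_inv a (lact a z)) = t a"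
    "lact a (lact_inv a (lact a z)) = lact a z"
    using lact_lact_inv[OF assms(1)] by auto
  moreover have "inj_on (lact a) {y \<in> A. s y = t a}"
    using left_nondeg assms(1) unfolding qYB_left_nondeg_def bij_betw_def by blast
  ultimately show ?thesis
    using assms by (auto dest: inj_onD)
qed

lemma ract_lact_inv:
  assumes "a \<in> A" "b \<in> A" "s a = s b"
  shows "ract a (lact_inv a b) = lact_inv b a"
proof -
  let ?y = "lact_inv a b"
  have y: "?y \<in> A" "s ?y = t a" "lact a ?y = b"
    using lact_lact_inv[OF assms] by auto
  then have "ract a ?y \<in> A" "s (ract a ?y) = t b" "lact b (ract a ?y) = a"
    using sigma_closed[of a ?y] sigma_involutive[of a ?y] assms by auto
  then show ?thesis
    using lact_inv_lact[of b "ract a ?y"] assms by simp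
qed

lemma t_lact_inv_commute:
  assumes "a \<in> A" "b \<in> A" "s a = s b"
  shows "t (lact_inv a b) = t (lact_inv b a)"
  using lact_lact_inv[OF assms] sigma_closed[of a "lact_inv a b"] ract_lact_inv[OF assms] assms by simp

lemma lact_inv_inj:
  "\<lbrakk>a \<in> A; b \<in> A; c \<in> A; s a = s b; s a = s c; lact_inv a b = lact_inv a c\<rbrakk> \<Longrightarrow> b = c"
  using lact_lact_inv by metis

text \<open>The RC-law of \<^const>\<open>lact_inv\<close> is the braid relation read through \<open>lact_inv\<close>.\<close>

lemma lact_inv_rc_law:
  assumes "a \<in> A" "b \<in> A" "c \<in> A" "s a = s b" "s a = s c"
  shows "lact_inv (lact_inv a b) (lact_inv a c) = lact_inv (lact_inv b a) (lact_inv b c)"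
proof -
  let ?y = "lact_inv a b" and ?w = "lact_inv a c"
  let ?z = "lact_inv ?y ?w" and ?r = "ract a ?y"
  have y: "?y \<in> A" "s ?y = t a" "lact a ?y = b"
    using lact_lact_inv assms by auto
  have w: "?w \<in> A" "s ?w = t a" "lact a ?w = c"
    using lact_lact_inv assms by auto
  have z: "?z \<in> A" "s ?z = t ?y" "lact ?y ?z = ?w"
    using lact_lact_inv y w by auto
  have r: "?r = lact_inv b a" "?r \<in> A" "t b = s ?r" "t ?r = t ?y"
    using ract_lact_inv assms sigma_closed[of a ?y] y by auto
  have "lact b (lact ?r ?z) = c"
    using lact_braid[of a ?y ?z] assms y z w by simp
  moreover have "lact ?r ?z \<in> A" "s (lact ?r ?z) = t b"
    using sigma_closed[of ?r ?z] r z by auto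
  ultimately have "lact_inv b c = lact ?r ?z"
    using lact_inv_lact[of b "lact ?r ?z"] assms by simp
  then show ?thesis
    using lact_inv_lact[of ?r ?z] r z by simp
qed

lemma ract_eq_if_lact_eq:
  assumes "x \<in> A" "y \<in> A" "t x = s y" "lact x y = x"
  shows "ract x y = y"
proof -
  have "ract x y \<in> A" "s (ract x y) = t x" "lact x (ract x y) = x"
    using sigma_closed[OF assms(1-3)] sigma_involutive[OF assms(1-3)] assms(4) by auto
  then show ?thesis
    using lact_inv_lact[of x y] lact_inv_lact[of x "ract x y"] assms by simp
qed

definition cstar :: "'a + 'v \<Rightarrow> 'a + 'v \<Rightarrow> 'a + 'v" (infixl "\<star>" 70) where
  "x \<star> y = the (compl_op s t (yb_star A s t lact) x y)"

lemma yb_star_eq: "yb_star A s t lact a b = (if s a = s b then Some (lact_inv a b) else None)"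
  unfolding yb_star_def lact_inv_def by simp

lemma compl_arrows_cases:
  assumes "x \<in> compl_arrows V A"
  obtains (Inl) a where "x = Inl a" "a \<in> A" | (Inr) v where "x = Inr v" "v \<in> V"
  using assms unfolding compl_arrows_def by blast

lemma compl_arrows_simps [simp]:
  "Inl a \<in> compl_arrows V A \<longleftrightarrow> a \<in> A" "Inr v \<in> compl_arrows V A \<longleftrightarrow> v \<in> V"
  unfolding compl_arrows_def by auto

lemma compl_op_cstar:
  "\<lbrakk>x \<in> compl_arrows V A; y \<in> compl_arrows V A; compl_src s x = compl_src s y\<rbrakk> \<Longrightarrow>
    compl_op s t (yb_star A s t lact) x y = Some (x \<star> y)"
  unfolding cstar_def compl_op_def
  by (erule compl_arrows_cases; erule compl_arrows_cases) (auto simp: yb_star_eq)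

lemma cstar_Inr_left: "compl_src s y = v \<Longrightarrow> Inr v \<star> y = y"
  unfolding cstar_def compl_op_def by auto

lemma cstar_Inr_right: "compl_src s x = v \<Longrightarrow> x \<star> Inr v = Inr (compl_tgt t x)"
  unfolding cstar_def compl_op_def by (cases x) auto

lemma cstar_Inl_self: "Inl a \<star> Inl a = Inr (t a)"
  unfolding cstar_def compl_op_def by auto

lemma cstar_Inl: "a \<noteq> b \<Longrightarrow> s a = s b \<Longrightarrow> Inl a \<star> Inl b = Inl (lact_inv a b)"
  unfolding cstar_def compl_op_def by (auto simp: yb_star_eq)

lemma cstar_closed:
  assumes "x \<in> compl_arrows V A" "y \<in> compl_arrows V A" "compl_src s x = compl_src s y"
  shows "x \<star> y \<in> compl_arrows V A \<and> compl_src s (x \<star> y) = compl_tgt t x \<and>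
    compl_tgt t (x \<star> y) = compl_tgt t (y \<star> x)"
  using assms(1)
proof (cases rule: compl_arrows_cases)
  case (Inl a)
  show ?thesis
    using assms(2)
  proof (cases rule: compl_arrows_cases)
    case (Inl b)
    then show ?thesis
      using \<open>x = Inl a\<close> \<open>a \<in> A\<close> assms(3) arrow_ends lact_lact_inv t_lact_inv_commute
      by (cases "a = b") (auto simp: cstar_Inl_self cstar_Inl)
  next
    case (Inr v)
    then show ?thesis
      using \<open>x = Inl a\<close> \<open>a \<in> A\<close> assms(3) arrow_ends by (auto simp: cstar_Inr_left cstar_Inr_right)
  qed
next
  case (Inr v)
  then show ?thesis
    using assms arrow_ends by (cases y) (auto simp: cstar_Inr_left cstar_Inr_right)
qed

lemma cstar_rc_law_Inl:
  assumes abc: "a \<in> A" "b \<in> A" "c \<in> A" "s a = s b" "s a = s c"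
  shows "(Inl a \<star> Inl b) \<star> (Inl a \<star> Inl c) = (Inl b \<star> Inl a) \<star> (Inl b \<star> Inl c)"
proof -
  consider "a = b" | "a \<noteq> b" "a = c" | "a \<noteq> b" "b = c" | "a \<noteq> b" "a \<noteq> c" "b \<noteq> c"
    by blast
  then show ?thesis
  proof cases
    case 1
    then show ?thesis by simp
  next
    case 2
    then show ?thesis
      using abc lact_lact_inv t_lact_inv_commute by (simp add: cstar_Inl cstar_Inl_self cstar_Inr_right)
  next
    case 3
    then show ?thesis
      using abc lact_lact_inv t_lact_inv_commute by (simp add: cstar_Inl cstar_Inl_self cstar_Inr_right)
  next
    case 4
    then have "lact_inv a b \<noteq> lact_inv a c" "lact_inv b a \<noteq> lact_inv b c"
      using lact_inv_inj abc by metis+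
    with 4 show ?thesis
      using abc lact_lact_inv lact_inv_rc_law by (simp add: cstar_Inl)
  qed
qed

lemma cstar_rc_law:
  assumes xyz: "x \<in> compl_arrows V A" "y \<in> compl_arrows V A" "z \<in> compl_arrows V A"
    and src: "compl_src s x = compl_src s y" "compl_src s x = compl_src s z"
  shows "(x \<star> y) \<star> (x \<star> z) = (y \<star> x) \<star> (y \<star> z)"
proof (cases "x \<in> range Inr \<or> y \<in> range Inr \<or> z \<in> range Inr")
  case True
  moreover have "compl_src s (y \<star> z) = compl_tgt t y" "compl_src s (x \<star> y) = compl_tgt t x"
    "compl_src s (x \<star> z) = compl_tgt t x" "compl_src s (y \<star> x) = compl_tgt t y"
    "compl_tgt t (x \<star> y) = compl_tgt t (y \<star> x)"
    using cstar_closed xyz src by auto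
  ultimately show ?thesis
    using src by (auto simp: cstar_Inr_left cstar_Inr_right)
next
  case False
  then obtain a b c where "x = Inl a" "y = Inl b" "z = Inl c"
    by (metis sum.exhaust rangeI)
  with xyz src show ?thesis
    using cstar_rc_law_Inl by simp
qed

sublocale completion: weak_rc_system V "compl_arrows V A" "compl_src s" "compl_tgt t"
  "compl_op s t (yb_star A s t lact)" cstar Inr
proof unfold_locales
  fix x assume x: "x \<in> compl_arrows V A"
  then show "compl_src s x \<in> V \<and> compl_tgt t x \<in> V"
    using arrow_ends by (cases rule: compl_arrows_cases) auto
  show "Inr (compl_src s x) \<star> x = x"
    by (simp add: cstar_Inr_left)
  show "x \<star> Inr (compl_src s x) = Inr (compl_tgt t x)"
    by (simp add: cstar_Inr_right)
  show "x \<star> x = Inr (compl_tgt t x)"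
    using x by (cases rule: compl_arrows_cases) (auto simp: cstar_Inl_self cstar_Inr_right)
qed (simp_all add: compl_op_cstar cstar_closed cstar_rc_law)

abbreviation yb_equiv :: "'v \<times> 'a list \<Rightarrow> 'v \<times> 'a list \<Rightarrow> bool" where
  "yb_equiv \<equiv> equivclp (yb_step V A s t lact ract)"

lemma yb_step_Paths:
  assumes "yb_step V A s t lact ract (v, xs) (w, ys)"
  shows "(v, xs) \<in> Paths V A s t \<and> (w, ys) \<in> Paths V A s t \<and> v = w \<and> ptgt t v xs = ptgt t w ys"
proof -
  obtain u x y zs where P: "(v, xs) \<in> Paths V A s t" and w: "w = v"
    and xs: "xs = u @ [x, y] @ zs" and ys: "ys = u @ [lact x y, ract x y] @ zs"
    using assms unfolding yb_step_def by auto
  then have "x \<in> A" "y \<in> A" "t x = s y"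
    by (auto simp: Paths_iff)
  with P show ?thesis
    using sigma_closed[of x y] unfolding w xs ys by (auto simp: Paths_iff)
qed

lemma yb_step_context:
  assumes "yb_step V A s t lact ract (v, xs) (v, ys)" "(u, ws @ xs @ zs) \<in> Paths V A s t"
  shows "yb_step V A s t lact ract (u, ws @ xs @ zs) (u, ws @ ys @ zs)"
proof -
  obtain us x y vs where "xs = us @ [x, y] @ vs" "ys = us @ [lact x y, ract x y] @ vs"
    using assms(1) unfolding yb_step_def by auto
  with assms(2) show ?thesis
    unfolding yb_step_def by (intro conjI exI[of _ u] exI[of _ "ws @ us"] exI[of _ "vs @ zs"]) auto
qed

sublocale yb: path_rewriting V A s t "yb_step V A s t lact ract"
  by unfold_locales (auto dest: yb_step_Paths intro: yb_step_context)

lemma strip_units_is_path: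
  "completion.is_path v xs \<Longrightarrow>
    set (strip_units xs) \<subseteq> A \<and> path_ok s t v (strip_units xs) \<and>
    ptgt t v (strip_units xs) = ptgt (compl_tgt t) v xs"
  by (induction xs arbitrary: v rule: strip_units.induct) auto

lemma strip_units_Paths:
  "(v, xs) \<in> Paths V (compl_arrows V A) (compl_src s) (compl_tgt t) \<Longrightarrow>
    (v, strip_units xs) \<in> Paths V A s t \<and> ptgt t v (strip_units xs) = ptgt (compl_tgt t) v xs"
  unfolding completion.Paths_iff_is_path using strip_units_is_path by (auto simp: Paths_iff)

lemma is_path_map_Inl:
  "set xs \<subseteq> A \<Longrightarrow> path_ok s t v xs \<Longrightarrow>
    completion.is_path v (map Inl xs) \<and> ptgt (compl_tgt t) v (map Inl xs) = ptgt t v xs"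
  by (induction xs arbitrary: v) auto

abbreviation strip_equiv :: "'v \<times> ('a + 'v) list \<Rightarrow> 'v \<times> ('a + 'v) list \<Rightarrow> bool" where
  "strip_equiv p q \<equiv> yb_equiv (fst p, strip_units (snd p)) (fst q, strip_units (snd q))"

sublocale strip: path_congruence V "compl_arrows V A" "compl_src s" "compl_tgt t" strip_equiv
  by (rule path_congruence_pullback[OF yb.path_congruence_axioms]) (use strip_units_Paths in auto)

lemma strip_equiv_square:
  assumes "x \<in> compl_arrows V A" "y \<in> compl_arrows V A" "compl_src s x = v" "compl_src s y = v"
  shows "strip_equiv (v, [x, x \<star> y]) (v, [y, y \<star> x])"
proof (cases "x \<in> range Inr \<or> y \<in> range Inr \<or> x = y")
  case True
  then show ?thesis
    using assms by (cases x; cases y) (auto simp: cstar_Inr_left cstar_Inr_right)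
next
  case False
  then obtain a b where ab: "x = Inl a" "y = Inl b" "a \<noteq> b"
    by (metis sum.exhaust rangeI)
  with assms have "a \<in> A" "b \<in> A" "s a = v" "s b = v" "v \<in> V"
    using arrow_ends by auto
  then have "yb_step V A s t lact ract (v, [] @ [a, lact_inv a b] @ []) (v, [] @ [b, lact_inv b a] @ [])"
    using lact_lact_inv[of a b] ract_lact_inv[of a b] arrow_ends unfolding yb_step_def
    by (simp add: Paths_iff) (metis append_Nil)
  with ab \<open>s a = v\<close> \<open>s b = v\<close> show ?thesis
    by (auto simp: cstar_Inl)
qed

lemma strip_equiv_row:
  assumes "x \<in> compl_arrows V A" "completion.is_path (compl_src s x) bs"
  shows "strip_equiv (compl_src s x, x # completion.col x bs)
    (compl_src s x, bs @ [completion.bot x bs])"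
  using assms
proof (induction bs arbitrary: x)
  case (Cons b bs)
  let ?v = "compl_src s x" and ?x' = "b \<star> x"
  have v: "?v \<in> V"
    using Cons.prems completion.arrow_ends by blast
  have b: "b \<in> compl_arrows V A" "compl_src s b = ?v" "compl_tgt t b \<in> V"
    using Cons.prems completion.arrow_ends by auto
  have x': "?x' \<in> compl_arrows V A" "compl_src s ?x' = compl_tgt t b"
    "x \<star> b \<in> compl_arrows V A" "compl_src s (x \<star> b) = compl_tgt t x"
    "compl_tgt t (x \<star> b) = compl_tgt t ?x'" "compl_tgt t ?x' \<in> V"
    using cstar_closed[of b x] cstar_closed[of x b] Cons.prems completion.arrow_ends by auto
  have col: "completion.is_path (compl_tgt t ?x') (completion.col ?x' bs)"
    "completion.bot ?x' bs \<in> compl_arrows V A"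
    "compl_src s (completion.bot ?x' bs) = ptgt (compl_tgt t) (compl_tgt t b) bs"
    using completion.is_path_col[of ?x' bs] x' Cons.prems by auto
  have "strip_equiv (?v, [x, x \<star> b] @ completion.col ?x' bs) (?v, [b, ?x'] @ completion.col ?x' bs)"
    using strip.R_append_right[OF strip_equiv_square[OF Cons.prems(1) b(1) refl b(2)]]
      Cons.prems v b x' col completion.ptgt_in_V
    by (simp add: completion.Paths_iff_is_path)
  moreover have "strip_equiv (?v, [b] @ ?x' # completion.col ?x' bs)
      (?v, [b] @ bs @ [completion.bot ?x' bs])"
    using strip.R_append_left[OF Cons.IH[OF x'(1)], of ?v "[b]"] Cons.prems v b x' col
    by (simp add: completion.Paths_iff_is_path)
  ultimately show ?case
    by (simp add: equivclp_trans)
qed simp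

lemma strip_equiv_grid:
  "\<lbrakk>v \<in> V; completion.is_path v as; completion.is_path v bs\<rbrakk> \<Longrightarrow>
    strip_equiv (v, as @ grid (\<star>) as bs) (v, bs @ grid (\<star>) bs as)"
proof (induction as arbitrary: v bs)
  case (Cons a as)
  let ?C = "completion.col a bs"
  have a: "a \<in> compl_arrows V A" "compl_src s a = v" "compl_tgt t a \<in> V"
    "completion.is_path (compl_tgt t a) as"
    using Cons.prems completion.arrow_ends by auto
  have C: "completion.is_path (compl_tgt t a) ?C" "completion.bot a bs \<in> compl_arrows V A"
    "compl_src s (completion.bot a bs) = ptgt (compl_tgt t) v bs"
    using completion.is_path_col[of a bs] a Cons.prems by auto
  have "strip_equiv (v, [a] @ as @ grid (\<star>) as ?C) (v, [a] @ ?C @ grid (\<star>) ?C as)"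
    using strip.R_append_left[OF Cons.IH[OF a(3,4) C(1)], of v "[a]"] a C Cons.prems
      completion.is_path_grid completion.ptgt_in_V
    by (simp add: completion.Paths_iff_is_path)
  moreover have "strip_equiv (v, (a # ?C) @ grid (\<star>) ?C as)
      (v, (bs @ [completion.bot a bs]) @ grid (\<star>) ?C as)"
    using strip.R_append_right[OF strip_equiv_row[OF a(1)]] a C Cons.prems
      completion.is_path_grid completion.ptgt_in_V
    by (simp add: completion.Paths_iff_is_path)
  ultimately show ?case
    by (simp add: grid_Cons_right equivclp_trans)
qed simp

lemma strip_equiv_if_path_equiv:
  "\<lbrakk>v \<in> V; completion.is_path v as; completion.is_path v bs; completion.path_equiv as bs\<rbrakk> \<Longrightarrow>
    strip_equiv (v, as) (v, bs)"
  using strip_equiv_grid[of v as bs] strip_units_Inr[of "grid (\<star>) as bs" V]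
    strip_units_Inr[of "grid (\<star>) bs as" V]
  unfolding completion.path_equiv_def by simp

lemma path_equiv_strip_units:
  "completion.is_path v xs \<Longrightarrow> completion.path_equiv xs (map Inl (strip_units xs))"
proof (induction xs arbitrary: v rule: strip_units.induct)
  case 1
  then show ?case
    by (simp add: completion.path_equiv_def)
next
  case (2 a xs)
  then show ?case
    using completion.path_equiv_append_left[of v "[Inl a]" xs "map Inl (strip_units xs)"]
      "2.IH"[of "t a"] strip_units_is_path[of "t a" xs] is_path_map_Inl[of "strip_units xs" "t a"]
    by simp
next
  case (3 w xs)
  then have "w = v" "v \<in> V" "completion.is_path v xs"
    by auto
  then show ?case
    using completion.path_equiv_eps_Cons[of v xs] "3.IH"[of v]
      completion.path_equiv_trans[of v "Inr v # xs" xs "map Inl (strip_units xs)"]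
      strip_units_is_path[of v xs] is_path_map_Inl[of "strip_units xs" v]
    by simp
qed

lemma path_equiv_sigma:
  assumes "x \<in> A" "y \<in> A" "t x = s y"
  shows "completion.path_equiv [Inl x, Inl y] [Inl (lact x y), Inl (ract x y)]"
proof (cases "lact x y = x")
  case True
  then show ?thesis
    using ract_eq_if_lact_eq[OF assms] completion.path_equiv_refl[of "s x" "[Inl x, Inl y]"] assms
    by simp
next
  case False
  let ?b = "lact x y"
  have b: "?b \<in> A" "s ?b = s x" "ract x y \<in> A" "t ?b = s (ract x y)"
    using sigma_closed[OF assms] by auto
  have "lact_inv x ?b = y" "lact_inv ?b x = ract x y"
    using lact_inv_lact[of x y] ract_lact_inv[of x ?b] assms b by auto
  then show ?thesis
    using completion.path_equiv_grid_square[of "s x" "[Inl x]" "[Inl ?b]"] False assms b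
    by (simp add: cstar_Inl)
qed

lemma path_equiv_yb_step:
  assumes "yb_step V A s t lact ract (v, xs) (w, ys)"
  shows "completion.path_equiv (map Inl xs) (map Inl ys)"
proof -
  obtain us x y zs where P: "(v, xs) \<in> Paths V A s t"
    and xs: "xs = us @ [x, y] @ zs" and ys: "ys = us @ [lact x y, ract x y] @ zs"
    using assms unfolding yb_step_def by auto
  then have xy: "x \<in> A" "y \<in> A" "t x = s y" "ptgt t v us = s x"
    "set us \<subseteq> A" "path_ok s t v us" "set zs \<subseteq> A" "path_ok s t (t y) zs"
    by (auto simp: Paths_iff)
  have "completion.path_equiv ([Inl x, Inl y] @ map Inl zs) ([Inl (lact x y), Inl (ract x y)] @ map Inl zs)"
    using completion.path_equiv_append_right[OF _ _ path_equiv_sigma[OF xy(1-3)]]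
      sigma_closed[OF xy(1-3)] is_path_map_Inl[OF xy(7,8)] xy
    by simp
  then show ?thesis
    using completion.path_equiv_append_left[of v "map Inl us"] is_path_map_Inl[OF xy(5,6)]
      sigma_closed[OF xy(1-3)] is_path_map_Inl[OF xy(7,8)] xy
    unfolding xs ys by simp
qed

lemma path_equiv_if_yb_equiv:
  assumes "yb_equiv (v, xs) q" "(v, xs) \<in> Paths V A s t"
  shows "completion.path_equiv (map Inl xs) (map Inl (snd q))"
  using assms(1)
proof (induction rule: equivclp_induct)
  case base
  show ?case
    using is_path_map_Inl completion.path_equiv_refl assms(2) by (auto simp: Paths_iff)
next
  case (step q r)
  obtain w ys w' zs where qr: "q = (w, ys)" "r = (w', zs)"
    by fastforce
  have "(w, ys) \<in> Paths V A s t" "(w', zs) \<in> Paths V A s t" "w' = w"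
    using yb_step_Paths step.hyps(2) qr by blast+
  moreover have "w = v"
    using yb.R_ends[OF step.hyps(1)[unfolded qr]] assms(2)
      calculation by blast
  moreover have "completion.path_equiv (map Inl ys) (map Inl zs)"
    using step.hyps(2) path_equiv_yb_step completion.path_equiv_sym qr by blast
  ultimately show ?case
    using step.IH completion.path_equiv_trans[of v "map Inl xs" "map Inl ys" "map Inl zs"]
      is_path_map_Inl assms(2) qr by (auto simp: Paths_iff)
qed

lemma path_equiv_if_strip_equiv:
  assumes "v \<in> V" "completion.is_path v as" "completion.is_path v bs"
    and "strip_equiv (v, as) (v, bs)"
  shows "completion.path_equiv as bs"
proof -
  let ?as = "map Inl (strip_units as)" and ?bs = "map Inl (strip_units bs)"
  have paths: "completion.is_path v ?as" "completion.is_path v ?bs" "(v, strip_units as) \<in> Paths V A s t"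
    using assms(1-3) strip_units_is_path is_path_map_Inl by (auto simp: Paths_iff)
  have "completion.path_equiv ?as ?bs"
    using path_equiv_if_yb_equiv[OF assms(4)] paths by simp
  then show ?thesis
    using path_equiv_strip_units[OF assms(2)] path_equiv_strip_units[OF assms(3)] paths assms
      completion.path_equiv_trans completion.path_equiv_sym by metis
qed

lemma rc_equiv_iff_strip_equiv:
  assumes "p \<in> Paths V (compl_arrows V A) (compl_src s) (compl_tgt t)"
    and "q \<in> Paths V (compl_arrows V A) (compl_src s) (compl_tgt t)"
  shows "rc_equiv V (compl_op s t (yb_star A s t lact)) Inr p q \<longleftrightarrow> strip_equiv p q"
proof -
  obtain v as w bs where pq: "p = (v, as)" "q = (w, bs)"
    by fastforce
  with assms have paths: "v \<in> V" "completion.is_path v as" "w \<in> V" "completion.is_path w bs"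
    by (auto simp: completion.Paths_iff_is_path)
  have "rc_equiv V (compl_op s t (yb_star A s t lact)) Inr p q \<longleftrightarrow>
      v = w \<and> completion.path_equiv as bs"
    unfolding pq using paths(2,4) by (rule completion.rc_equiv_iff_path_equiv)
  also have "\<dots> \<longleftrightarrow> strip_equiv p q"
  proof
    assume "v = w \<and> completion.path_equiv as bs"
    then show "strip_equiv p q"
      unfolding pq using strip_equiv_if_path_equiv paths by blast
  next
    assume pq_equiv: "strip_equiv p q"
    then have "v = w"
      using strip.R_ends assms unfolding pq by blast
    with pq_equiv show "v = w \<and> completion.path_equiv as bs"
      unfolding pq using path_equiv_if_strip_equiv paths by blast
  qed
  finally show ?thesis .
qed

sublocale strip_iso: path_quot_iso V A s t yb_equiv "compl_arrows V A" "compl_src s" "compl_tgt t"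
  "rc_equiv V (compl_op s t (yb_star A s t lact)) Inr" strip_units
proof (rule path_quot_iso.intro[OF yb.path_congruence_axioms], unfold_locales)
  show "\<exists>as. (v, as) \<in> Paths V (compl_arrows V A) (compl_src s) (compl_tgt t) \<and> strip_units as = bs"
    if "(v, bs) \<in> Paths V A s t" for v bs
    unfolding completion.Paths_iff_is_path using that is_path_map_Inl
    by (auto simp: Paths_iff intro!: exI[of _ "map Inl bs"])
qed (simp_all add: strip_units_Paths rc_equiv_iff_strip_equiv)

end

theorem lemma5p6:
  fixes V :: "'v set" and A :: "'a set" and s t :: "'a \<Rightarrow> 'v"
    and lact ract :: "'a \<Rightarrow> 'a \<Rightarrow> 'a"
  assumes "qYB_map V A s t lact ract"
    and "qYB_involutive A s t lact ract"
    and "qYB_left_nondeg A s t lact"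
  shows "cat_iso
           (rc_struct_cat V (compl_arrows V A) (compl_src s) (compl_tgt t)
              (compl_op s t (yb_star A s t lact)) Inr)
           (yb_struct_cat V A s t lact ract)"
proof -
  interpret yang_baxter V A s t lact ract
    using assms by unfold_locales
  show ?thesis
    unfolding rc_struct_cat_def yb_struct_cat_def by (rule strip_iso.cat_iso_quot)
qed

end
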